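(* Fix $x\in\mathbf{X}$ and let $(k_0,j_0)$ be the unique pair with $x\in\mathbf{X}_{k_0,j_0}$. Suppose OOD detectors satisfy $H_{OOD,k}(x)\le\delta_k$ for $k=1,\dots,T$ and the within-task prediction satisfies $H_{WP}(x)\le\epsilon$. Let the task-id prediction be $\mathbf{P}(x\in\mathbf{X}_k\mid D)=\frac{\mathbf{P}'_k(x\in\mathbf{X}_k\mid D)}{\sum_{k'}\mathbf{P}'_{k'}(x\in\mathbf{X}_{k'}\mid D)}$ and the class-incremental prediction be $\mathbf{P}(x\in\mathbf{X}_{k,j}\mid D)=\mathbf{P}(x\in\mathbf{X}_{k,j}\mid x\in\mathbf{X}_k,D)\,\mathbf{P}(x\in\mathbf{X}_k\mid D)$. Then $$H_{CIL}(x)\le\epsilon+\Big(\sum_k\mathbf{1}_{x\in\mathbf{X}_k}e^{\delta_k}\Big)\Big(\sum_k(1-e^{-\delta_k})\Big),$$ where $\mathbf{1}_{x\in\mathbf{X}_k}$ is the indicator of $x\in\mathbf{X}_k$.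
   Context: $\mathbf{X}$ is an input domain which is the disjoint union of task domains $\mathbf{X}_1,\dots,\mathbf{X}_T$, and each $\mathbf{X}_k$ is the disjoint union of class domains $\mathbf{X}_{k,j}$. $D$ is a fixed conditioning event. A within-task prediction (WP) gives, for each task $k$, a probability distribution $\{\mathbf{P}(x\in\mathbf{X}_{k,j}\mid x\in\mathbf{X}_k,D)\}_j$ over the classes of task $k$; $H_{WP}(x)=-\log\mathbf{P}(x\in\mathbf{X}_{k_0,j_0}\mid x\in\mathbf{X}_{k_0},D)$. $H_{CIL}(x)=-\log\mathbf{P}(x\in\mathbf{X}_{k_0,j_0}\mid D)$. An OOD detector for task $k$ is a value $\mathbf{P}'_k(x\in\mathbf{X}_k\mid D)\in[0,1]$ with $\mathbf{P}'_k(x\in\mathbf{X}\setminus\mathbf{X}_k\mid D)=1-\mathbf{P}'_k(x\in\mathbf{X}_k\mid D)$, and $H_{OOD,k}(x)=-\log\mathbf{P}'_k(x\in\mathbf{X}_k\mid D)$ if $x\in\mathbf{X}_k$, $H_{OOD,k}(x)=-\log\mathbf{P}'_k(x\in\mathbf{X}\setminus\mathbf{X}_k\mid D)$ otherwise. *)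

theory Defs
  imports "HOL-Analysis.Analysis"
begin

definition nlog :: "real \<Rightarrow> ereal" where
  "nlog p = (if p > 0 then ereal (- ln p) else \<infinity>)"

text \<open>H_OOD,k(x): Pood k x is the detector value P'_k(x in X_k | D), Xt k the task domain.\<close>
definition H_OOD :: "(nat \<Rightarrow> 'a set) \<Rightarrow> (nat \<Rightarrow> 'a \<Rightarrow> real) \<Rightarrow> nat \<Rightarrow> 'a \<Rightarrow> ereal" where
  "H_OOD Xt Pood k x = (if x \<in> Xt k then nlog (Pood k x) else nlog (1 - Pood k x))"

definition TP :: "nat \<Rightarrow> (nat \<Rightarrow> 'a \<Rightarrow> real) \<Rightarrow> nat \<Rightarrow> 'a \<Rightarrow> real" where
  "TP T Pood k x = Pood k x / (\<Sum>k'\<in>{1..T}. Pood k' x)"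

text \<open>Class-incremental prediction P(x in X_{k,j} | D); Pwp k j x = P(x in X_{k,j} | x in X_k, D).\<close>
definition CIL :: "nat \<Rightarrow> (nat \<Rightarrow> 'a \<Rightarrow> real) \<Rightarrow> (nat \<Rightarrow> nat \<Rightarrow> 'a \<Rightarrow> real) \<Rightarrow> nat \<Rightarrow> nat \<Rightarrow> 'a \<Rightarrow> real" where
  "CIL T Pood Pwp k j x = Pwp k j x * TP T Pood k x"

end

theory Submission
  imports Defs
begin

text \<open>The true task k0 is the only task whose domain contains x, so its detector gives
  P'_k0 \<ge> e^(-\<delta>_k0), while every other detector gives P'_k \<le> 1 - e^(-\<delta>_k).  Writing
  a = P'_k0 and b for the sum of the other detector values, the task-id entropy is
  ln (1 + b/a) \<le> b/a \<le> e^(\<delta>_k0) \<Sum>_k (1 - e^(-\<delta>_k)), and e^(\<delta>_k0) is exactly the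
  indicator sum of the statement.  The CIL entropy is the sum of
  the within-task entropy and the task-id entropy.\<close>

lemma nlog_le_ereal_iff: "nlog p \<le> ereal d \<longleftrightarrow> exp (- d) \<le> p"
proof (cases "p > 0")
  case True
  then have "nlog p \<le> ereal d \<longleftrightarrow> - d \<le> ln p" by (auto simp: nlog_def)
  also have "\<dots> \<longleftrightarrow> exp (- d) \<le> p" using True by (metis exp_le_cancel_iff exp_ln)
  finally show ?thesis .
next
  case False
  moreover have "\<not> exp (- d) \<le> p" using False by (meson exp_gt_zero less_le_trans not_le)
  ultimately show ?thesis by (simp add: nlog_def)
qed

lemma nlog_mult: "0 < p \<Longrightarrow> 0 < q \<Longrightarrow> nlog (p * q) = nlog p + nlog q"
  by (simp add: nlog_def ln_mult)

lemma nlog_share_le: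
  assumes "0 < a" "0 \<le> b"
  shows "nlog (a / (a + b)) \<le> ereal (b / a)"
proof -
  have "- ln (a / (a + b)) = ln (1 + b / a)"
    using assms by (simp add: ln_div field_simps)
  also have "\<dots> \<le> b / a"
    using assms by (intro ln_add_one_self_le_self) simp
  finally show ?thesis using assms by (simp add: nlog_def)
qed

lemma sum_indicator_disjoint_family:
  fixes f :: "'i \<Rightarrow> 'b::semiring_1"
  assumes "disjoint_family_on A S" "k0 \<in> S" "x \<in> A k0" "finite S"
  shows "(\<Sum>k\<in>S. indicator (A k) x * f k) = f k0"
proof -
  have "(\<Sum>k\<in>S. indicator (A k) x * f k) = (\<Sum>k\<in>S. if k = k0 then f k else 0)"
    using assms(1-3) by (intro sum.cong) (auto simp: disjoint_family_on_def split: split_indicator)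
  then show ?thesis using assms(2,4) by simp
qed

lemma nlog_task_share_le:
  fixes p \<delta> :: "nat \<Rightarrow> real"
  assumes "finite S" "k0 \<in> S"
    and nonneg: "\<And>k. k \<in> S \<Longrightarrow> 0 \<le> p k"
    and in_task: "exp (- \<delta> k0) \<le> p k0" "p k0 \<le> 1"
    and out_task: "\<And>k. k \<in> S \<Longrightarrow> k \<noteq> k0 \<Longrightarrow> p k \<le> 1 - exp (- \<delta> k)"
  shows "nlog (p k0 / sum p S) \<le> ereal (exp (\<delta> k0) * (\<Sum>k\<in>S. 1 - exp (- \<delta> k)))"
proof -
  define b where "b = (\<Sum>k\<in>S - {k0}. p k)"
  define c where "c = (\<lambda>k. 1 - exp (- \<delta> k))"
  have a_pos: "0 < p k0" using in_task(1) exp_gt_zero[of "- \<delta> k0"] by linarith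
  have b_nonneg: "0 \<le> b" unfolding b_def using nonneg by (intro sum_nonneg) auto
  have "0 \<le> c k0" unfolding c_def using in_task by linarith
  have "b \<le> (\<Sum>k\<in>S - {k0}. c k)" unfolding b_def c_def using out_task by (intro sum_mono) auto
  also have "\<dots> \<le> c k0 + (\<Sum>k\<in>S - {k0}. c k)" using \<open>0 \<le> c k0\<close> by linarith
  also have "\<dots> = sum c S" by (rule sum.remove[OF assms(1,2), symmetric])
  finally have b_le: "b \<le> sum c S" .
  have inv_a_le: "1 / p k0 \<le> exp (\<delta> k0)"
    using in_task(1) a_pos by (simp add: exp_minus field_simps)
  have "b * (1 / p k0) \<le> sum c S * exp (\<delta> k0)"
    using a_pos b_nonneg b_le by (intro mult_mono[OF b_le inv_a_le]) auto
  then have bound: "b / p k0 \<le> exp (\<delta> k0) * sum c S" by (simp add: mult.commute)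
  have "sum p S = p k0 + b" unfolding b_def by (rule sum.remove[OF assms(1,2)])
  then have "nlog (p k0 / sum p S) \<le> ereal (b / p k0)"
    using nlog_share_le[OF a_pos b_nonneg] by simp
  also have "\<dots> \<le> ereal (exp (\<delta> k0) * sum c S)" using bound by simp
  finally show ?thesis unfolding c_def .
qed

theorem theorem3:
  fixes T :: nat and X :: "'a set" and Xt :: "nat \<Rightarrow> 'a set"
    and Xc :: "nat \<Rightarrow> nat \<Rightarrow> 'a set" and J :: "nat \<Rightarrow> nat set"
    and Pood :: "nat \<Rightarrow> 'a \<Rightarrow> real" and Pwp :: "nat \<Rightarrow> nat \<Rightarrow> 'a \<Rightarrow> real"
    and \<delta> :: "nat \<Rightarrow> real" and \<epsilon> :: real and x :: 'a and k0 j0 :: nat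
  assumes X_union: "X = (\<Union>k\<in>{1..T}. Xt k)"
    and Xt_disj: "disjoint_family_on Xt {1..T}"
    and Xt_union: "\<And>k. k \<in> {1..T} \<Longrightarrow> Xt k = (\<Union>j\<in>J k. Xc k j)"
    and Xc_disj: "\<And>k. k \<in> {1..T} \<Longrightarrow> disjoint_family_on (Xc k) (J k)"
    and J_fin: "\<And>k. k \<in> {1..T} \<Longrightarrow> finite (J k)"
    and WP_nonneg: "\<And>k j. k \<in> {1..T} \<Longrightarrow> j \<in> J k \<Longrightarrow> 0 \<le> Pwp k j x"
    and WP_sum: "\<And>k. k \<in> {1..T} \<Longrightarrow> (\<Sum>j\<in>J k. Pwp k j x) = 1"
    and OOD_range: "\<And>k. k \<in> {1..T} \<Longrightarrow> 0 \<le> Pood k x \<and> Pood k x \<le> 1"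
    and x_in: "x \<in> X"
    and k0: "k0 \<in> {1..T}" and j0: "j0 \<in> J k0" and x_k0j0: "x \<in> Xc k0 j0"
    and OOD_bound: "\<And>k. k \<in> {1..T} \<Longrightarrow> H_OOD Xt Pood k x \<le> ereal (\<delta> k)"
    and WP_bound: "nlog (Pwp k0 j0 x) \<le> ereal \<epsilon>"
  shows "nlog (CIL T Pood Pwp k0 j0 x)
    \<le> ereal (\<epsilon> + (\<Sum>k\<in>{1..T}. indicator (Xt k) x * exp (\<delta> k))
                   * (\<Sum>k\<in>{1..T}. 1 - exp (- \<delta> k)))"
proof -
  have x_k0: "x \<in> Xt k0" using Xt_union[OF k0] j0 x_k0j0 by blast
  have x_not_k: "x \<notin> Xt k" if "k \<in> {1..T}" "k \<noteq> k0" for k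
    using Xt_disj x_k0 that k0 unfolding disjoint_family_on_def by blast
  have in_task: "exp (- \<delta> k0) \<le> Pood k0 x"
    using OOD_bound[OF k0] x_k0 by (simp add: H_OOD_def nlog_le_ereal_iff)
  have out_task: "Pood k x \<le> 1 - exp (- \<delta> k)" if "k \<in> {1..T}" "k \<noteq> k0" for k
    using OOD_bound[OF that(1)] x_not_k[OF that] by (simp add: H_OOD_def nlog_le_ereal_iff)
  have task_id: "nlog (TP T Pood k0 x) \<le> ereal (exp (\<delta> k0) * (\<Sum>k\<in>{1..T}. 1 - exp (- \<delta> k)))"
    unfolding TP_def using k0 OOD_range in_task out_task by (intro nlog_task_share_le) auto
  have "0 < Pwp k0 j0 x" "0 < TP T Pood k0 x"
    using WP_bound task_id by (auto simp: nlog_def split: if_splits)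
  then have "nlog (CIL T Pood Pwp k0 j0 x) = nlog (Pwp k0 j0 x) + nlog (TP T Pood k0 x)"
    by (simp add: CIL_def nlog_mult)
  also have "\<dots> \<le> ereal \<epsilon> + ereal (exp (\<delta> k0) * (\<Sum>k\<in>{1..T}. 1 - exp (- \<delta> k)))"
    using WP_bound task_id by (rule add_mono)
  moreover have "(\<Sum>k\<in>{1..T}. indicator (Xt k) x * exp (\<delta> k)) = exp (\<delta> k0)"
    using Xt_disj k0 x_k0 by (intro sum_indicator_disjoint_family) auto
  ultimately show ?thesis by (simp only: plus_ereal.simps(1))
qed

end
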